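(* Let $C,D\subset\mathbb{R}^d$ be polyhedral cones, $A,B$ conic Borel sets, $F\in\mathcal{F}_i(C)$, $G\in\mathcal{F}_j(D)$ with $i+j=d+k$ and $k>0$. If $F$ and $G$ intersect transversely, then $$\varphi_{F\cap G}(C\cap D,A\cap B)=\Phi_k(F\cap G,A\cap B)\,V_{d-k}\big(N(C,F)+N(D,G)\big).$$
   Context: Work in $\mathbb{R}^d$, $d\ge2$; $\gamma_L$ is the standard Gaussian measure on a linear subspace $L$, $\gamma_d=\gamma_{\mathbb{R}^d}$. Conic Borel sets are Borel sets invariant under multiplication by all $\lambda>0$. A polyhedral cone is $\mathbb{R}^d$ or a finite intersection of closed halfspaces whose boundaries contain the origin; $\mathcal{F}_k(C)$ its set of $k$-faces, $L(F)$ the linear hull of a face $F$, $N(C,F)=\{y:\langle y,x\rangle\le0\ \forall x\in C,\ \langle y,x\rangle=0\ \forall x\in F\}$. Two polyhedral cones $F,G$ intersect transversely if $\dim(F\cap G)=\dim F+\dim G-d$ and $\mathrm{relint}\,F\cap\mathrm{relint}\,G\neq\emptyset$ (in which case $F\cap G$ is a face of $C\cap D$). Curvature measures: $\Phi_k(C,A)=\sum_{F\in\mathcal{F}_k(C)}\gamma_{L(F)}(F\cap A)\gamma_{L(F)^\perp}(N(C,F))$; conic intrinsic volumes $V_k(C)=\sum_{F\in\mathcal{F}_k(C)}\gamma_d(F+N(C,F))$. For a face $F$ of a polyhedral cone $C$ and a conic Borel set $A$, $\varphi_F(C,A):=\gamma_d((A\cap F)+N(C,F))$, which equals the probability that the metric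 projection onto $C$ of a standard Gaussian vector lies in $A\cap\mathrm{relint}\,F$. *)

theory Defs
  imports "HOL-Analysis.Analysis"
begin

definition std_gauss :: "'a::euclidean_space measure" where
  "std_gauss = density lborel
     (\<lambda>x. ennreal ((2 * pi) powr (- real DIM('a) / 2) * exp (- (norm x)\<^sup>2 / 2)))"

definition gamma_d :: "'a::euclidean_space set \<Rightarrow> real" where
  "gamma_d S = measure std_gauss S"

text \<open>Standard Gaussian measure gamma_L on a linear subspace L, realised as the law of the
  orthogonal projection onto L of a standard Gaussian vector of the whole space.\<close>
definition gamma_sub :: "'a::euclidean_space set \<Rightarrow> 'a set \<Rightarrow> real" where
  "gamma_sub L S = measure std_gauss {x. closest_point L x \<in> S}"

definition polyhedral_cone :: "'a::euclidean_space set \<Rightarrow> bool" where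
  "polyhedral_cone C \<longleftrightarrow> C = UNIV \<or>
     (\<exists>Y. finite Y \<and> Y \<noteq> {} \<and> (\<forall>y\<in>Y. y \<noteq> 0) \<and> C = {x. \<forall>y\<in>Y. inner y x \<le> 0})"

definition conic_borel :: "'a::euclidean_space set \<Rightarrow> bool" where
  "conic_borel A \<longleftrightarrow> A \<in> sets borel \<and> (\<forall>t::real. t > 0 \<longrightarrow> (\<forall>x\<in>A. t *\<^sub>R x \<in> A)) "

definition kfaces :: "nat \<Rightarrow> 'a::euclidean_space set \<Rightarrow> 'a set set" where
  "kfaces k C = {F. F face_of C \<and> aff_dim F = int k}"

definition normal_cone :: "'a::euclidean_space set \<Rightarrow> 'a set \<Rightarrow> 'a set" where
  "normal_cone C F = {y. (\<forall>x\<in>C. inner y x \<le> 0) \<and> (\<forall>x\<in>F. inner y x = 0)}"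

definition msum :: "'a::euclidean_space set \<Rightarrow> 'a set \<Rightarrow> 'a set" where
  "msum X Y = {x + y | x y. x \<in> X \<and> y \<in> Y}"

definition curv_measure :: "nat \<Rightarrow> 'a::euclidean_space set \<Rightarrow> 'a set \<Rightarrow> real" where
  "curv_measure k C A = (\<Sum>F\<in>kfaces k C.
      gamma_sub (span F) (F \<inter> A) * gamma_sub (orthogonal_comp (span F)) (normal_cone C F))"

definition conic_intrinsic_volume :: "nat \<Rightarrow> 'a::euclidean_space set \<Rightarrow> real" where
  "conic_intrinsic_volume k C = (\<Sum>F\<in>kfaces k C. gamma_d (msum F (normal_cone C F)))"

definition local_phi :: "'a::euclidean_space set \<Rightarrow> 'a set \<Rightarrow> 'a set \<Rightarrow> real" where
  "local_phi F C A = gamma_d (msum (A \<inter> F) (normal_cone C F))"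

definition transverse :: "'a::euclidean_space set \<Rightarrow> 'a set \<Rightarrow> bool" where
  "transverse F G \<longleftrightarrow> aff_dim (F \<inter> G) = aff_dim F + aff_dim G - int DIM('a) \<and>
     rel_interior F \<inter> rel_interior G \<noteq> {}"

end

theory Submission
  imports Defs "HOL-Probability.Distributions"
begin

text \<open>Let \<open>L = span (F \<inter> G)\<close>. At a common relative interior point of \<open>F\<close> and \<open>G\<close> the
  normal cone \<open>N\<close> of \<open>C \<inter> D\<close> at \<open>F \<inter> G\<close> is generated by the constraints of \<open>C\<close> and \<open>D\<close>
  active there (a local Farkas lemma), hence equals \<open>N(C,F) + N(D,G)\<close>, and it spans \<open>L\<^sup>\<bottom>\<close>.
  So \<open>(A \<inter> B \<inter> F \<inter> G) + N\<close> is a product set with respect to \<open>L + L\<^sup>\<bottom>\<close>, and its Gaussian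
  measure factorises because the orthogonal projections of a standard Gaussian vector onto \<open>L\<close>
  and \<open>L\<^sup>\<bottom>\<close> are independent. The two factors are \<open>\<Phi>\<^sub>k(F \<inter> G, A \<inter> B)\<close> and
  \<open>V\<^bsub>d-k\<^esub>(N)\<close>: the only top-dimensional face of \<open>F \<inter> G\<close>, resp. \<open>N\<close>, is the cone itself,
  whose normal cone is the whole complementary subspace.\<close>

section \<open>Lebesgue measure is invariant under linear isometric involutions\<close>

definition isometric_involution :: "('a::euclidean_space \<Rightarrow> 'a) \<Rightarrow> bool" where
  "isometric_involution T \<longleftrightarrow> linear T \<and> (\<forall>x. norm (T x) = norm x) \<and> (\<forall>x. T (T x) = x)"

lemma borel_measurable_linear:
  "linear (T :: 'a::euclidean_space \<Rightarrow> 'b::euclidean_space) \<Longrightarrow> T \<in> borel_measurable borel"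
  by (intro borel_measurable_continuous_onI linear_continuous_on linear_conv_bounded_linear[THEN iffD1])

lemma isometric_involution_vimage_ball:
  assumes "isometric_involution T"
  shows "T -` ball a r = ball (T a) r"
proof -
  have "dist a (T y) = dist (T a) y" for y
    using assms unfolding isometric_involution_def by (metis dist_norm linear_diff)
  then show ?thesis by auto
qed

lemma isometric_involution_vimage_null_sets:
  assumes T: "isometric_involution T" and N: "N \<in> null_sets lborel"
  shows "T -` N \<in> null_sets lborel"
proof -
  have lin: "linear T" using T by (simp add: isometric_involution_def)
  have "T -` N = T ` N"
    using T unfolding isometric_involution_def by (auto simp: image_iff) metis
  moreover have "negligible (T ` N)"
    using N negligible_iff_null_sets[of N] null_sets_completionI[of N lborel]
    by (intro negligible_differentiable_image_negligible order_refl)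
      (auto simp: lin linear_imp_differentiable differentiable_at_imp_differentiable_on)
  moreover have "T -` N \<in> sets borel"
    using N measurable_sets_borel[OF borel_measurable_linear[OF lin]] by auto
  ultimately show ?thesis
    using negligible_iff_null_sets null_sets_completion_iff[of _ lborel] by (metis sets_lborel)
qed

lemma emeasure_lborel_ball_translate:
  fixes c d :: "'a::euclidean_space"
  shows "emeasure lborel (ball c r) = emeasure lborel (ball d r)"
proof (cases "r \<ge> 0")
  case True
  then show ?thesis
    using emeasure_lebesgue_ball_conv_unit_ball[of r c] emeasure_lebesgue_ball_conv_unit_ball[of r d]
    by simp
qed (simp add: ball_empty)

lemma open_disjoint_balls_decomposition:
  fixes U :: "'a::euclidean_space set"
  assumes "open U"
  obtains K where "countable K" "\<And>x r. (x, r) \<in> K \<Longrightarrow> ball x r \<subseteq> U"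
    "disjoint_family_on (\<lambda>(x, r). ball x r) K"
    "U - (\<Union>(x, r) \<in> K. ball x r) \<in> null_sets lborel"
proof -
  obtain K where K: "countable K" "K \<subseteq> {(x, r). r > 0 \<and> ball x r \<subseteq> U}"
     "pairwise (\<lambda>i j. disjnt (ball (fst i) (snd i)) (ball (fst j) (snd j))) K"
     "negligible (U - (\<Union>i \<in> K. ball (fst i) (snd i)))"
  proof (rule Vitali_covering_theorem_balls[of U _ fst snd])
    fix x and d :: real assume "x \<in> U" "0 < d"
    then obtain e where "e > 0" "ball x e \<subseteq> U" using assms open_contains_ball by blast
    then show "\<exists>i. i \<in> {(x, r). r > 0 \<and> ball x r \<subseteq> U} \<and> x \<in> ball (fst i) (snd i) \<and> snd i < d"
      using \<open>0 < d\<close> by (intro exI[of _ "(x, min e d / 2)"]) auto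
  qed blast
  have "(\<Union>i \<in> K. ball (fst i) (snd i)) = (\<Union>(x, r) \<in> K. ball x r)"
    by (auto simp: case_prod_beta)
  moreover have "U - (\<Union>(x, r) \<in> K. ball x r) \<in> sets borel"
    using assms by (intro sets.Diff borel_open open_UN) auto
  ultimately have "U - (\<Union>(x, r) \<in> K. ball x r) \<in> null_sets lborel"
    using K(4) negligible_iff_null_sets null_sets_completion_iff[of _ lborel] by (metis sets_lborel)
  moreover have "disjoint_family_on (\<lambda>(x, r). ball x r) K"
    using K(3) by (auto simp: disjoint_family_on_def pairwise_def disjnt_def case_prod_beta)
  ultimately show ?thesis using that K(1,2) by blast
qed

lemma emeasure_lborel_vimage_open_isometric_involution:
  fixes T :: "'a::euclidean_space \<Rightarrow> 'a"
  assumes T: "isometric_involution T" and U: "open U"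
  shows "emeasure lborel (T -` U) = emeasure lborel U"
proof -
  have Tm[measurable]: "T \<in> borel_measurable borel"
    using T by (simp add: isometric_involution_def borel_measurable_linear)
  obtain K where K: "countable K" "\<And>x r. (x, r) \<in> K \<Longrightarrow> ball x r \<subseteq> U"
    "disjoint_family_on (\<lambda>(x, r). ball x r) K"
    and null: "U - (\<Union>(x, r) \<in> K. ball x r) \<in> null_sets lborel"
    using open_disjoint_balls_decomposition[OF U] by blast
  define V where "V = (\<Union>(x, r) \<in> K. ball x r)"
  have VU: "V \<subseteq> U" using K(2) by (auto simp: V_def)
  have [measurable]: "V \<in> sets borel" unfolding V_def by (intro borel_open open_UN) auto
  have TV: "T -` V = (\<Union>(x, r) \<in> K. ball (T x) r)"
    by (simp add: V_def vimage_UN split_beta isometric_involution_vimage_ball[OF T])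
  have "disjoint_family_on (\<lambda>(x, r). ball (T x) r) K"
    using K(3)
    by (simp add: disjoint_family_on_def case_prod_beta
        isometric_involution_vimage_ball[OF T, symmetric] flip: vimage_Int)
  then have "emeasure lborel (T -` V) = (\<integral>\<^sup>+i. emeasure lborel (ball (T (fst i)) (snd i)) \<partial>count_space K)"
    unfolding TV using K(1) by (subst emeasure_UN_countable) (auto simp: case_prod_beta)
  also have "\<dots> = (\<integral>\<^sup>+i. emeasure lborel (ball (fst i) (snd i)) \<partial>count_space K)"
    by (metis emeasure_lborel_ball_translate)
  also have "\<dots> = emeasure lborel V"
    unfolding V_def using K(1,3) by (subst emeasure_UN_countable) (auto simp: case_prod_beta)
  finally have "emeasure lborel (T -` V) = emeasure lborel V" .
  moreover have "emeasure lborel U = emeasure lborel V"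
  proof -
    have "emeasure lborel U = emeasure lborel (V \<union> (U - V))" using VU by (simp add: Un_absorb1)
    also have "\<dots> = emeasure lborel V" using null[folded V_def] by (intro emeasure_Un_null_set) auto
    finally show ?thesis .
  qed
  moreover have "emeasure lborel (T -` U) = emeasure lborel (T -` V)"
  proof -
    have "emeasure lborel (T -` U) = emeasure lborel (T -` V \<union> T -` (U - V))"
      using VU by (simp add: Un_absorb1 vimage_mono flip: vimage_Un)
    also have "\<dots> = emeasure lborel (T -` V)"
      using isometric_involution_vimage_null_sets[OF T null[folded V_def]]
      by (intro emeasure_Un_null_set) (auto intro: measurable_sets_borel[OF Tm])
    finally show ?thesis .
  qed
  ultimately show ?thesis by simp
qed

lemma lborel_distr_isometric_involution:
  fixes T :: "'a::euclidean_space \<Rightarrow> 'a"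
  assumes T: "isometric_involution T"
  shows "distr lborel borel T = lborel"
proof (rule measure_eqI_generator_eq[where \<Omega>=UNIV and E="{S. open S}" and A="\<lambda>i. ball 0 (Suc i)"])
  have [measurable]: "T \<in> borel_measurable borel"
    using T by (simp add: isometric_involution_def borel_measurable_linear)
  show "emeasure (distr lborel borel T) X = emeasure lborel X" if "X \<in> {S. open S}" for X
    using that by (simp add: emeasure_distr emeasure_lborel_vimage_open_isometric_involution[OF T])
  then show "emeasure (distr lborel borel T) (ball 0 (Suc i)) \<noteq> \<infinity>" for i
    using emeasure_lborel_ball_finite[of 0 "Suc i"] by (simp add: less_top)
  show "(\<Union>i. ball (0::'a) (Suc i)) = UNIV"
  proof (intro set_eqI iffI UNIV_I)
    fix x :: 'a
    obtain n :: nat where "norm x \<le> real n" using real_arch_simple by blast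
    then show "x \<in> (\<Union>i. ball 0 (Suc i))" by (intro UN_I[of n]) auto
  qed
qed (auto simp: Int_stable_def sets_borel)

section \<open>The standard Gaussian measure\<close>

definition gauss_density :: "'a::euclidean_space \<Rightarrow> real" where
  "gauss_density x = (2 * pi) powr (- real DIM('a) / 2) * exp (- (norm x)\<^sup>2 / 2)"

lemma std_gauss_eq_density: "std_gauss = density lborel (\<lambda>x. ennreal (gauss_density x))"
  by (simp add: std_gauss_def gauss_density_def)

lemma borel_measurable_gauss_density [measurable]: "gauss_density \<in> borel_measurable borel"
  unfolding gauss_density_def by measurable

lemma gauss_density_nonneg: "gauss_density x \<ge> 0"
  by (simp add: gauss_density_def)

lemma space_std_gauss [simp]: "space std_gauss = UNIV"
  by (simp add: std_gauss_def)

lemma sets_std_gauss [simp]: "sets std_gauss = sets borel"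
  by (simp add: std_gauss_def)

lemma gauss_density_eq_prod:
  "gauss_density (x::'a::euclidean_space) = (\<Prod>b\<in>Basis. std_normal_density (x \<bullet> b))"
proof -
  have norm: "(norm x)\<^sup>2 = (\<Sum>b\<in>Basis. (x \<bullet> b)\<^sup>2)"
    by (subst power2_norm_eq_inner, subst euclidean_inner) (simp add: power2_eq_square)
  have const: "(1 / sqrt (2 * pi)) ^ DIM('a) = (2 * pi) powr (- real DIM('a) / 2)"
  proof -
    have "(1 / sqrt (2 * pi)) ^ DIM('a) = ((2 * pi) powr (- 1 / 2)) ^ DIM('a)"
      by (simp add: powr_minus_divide powr_half_sqrt[symmetric])
    also have "\<dots> = (2 * pi) powr (- real DIM('a) / 2)"
      by (simp add: powr_realpow[symmetric] powr_powr)
    finally show ?thesis .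
  qed
  have "(\<Prod>b\<in>Basis. std_normal_density (x \<bullet> b))
      = (\<Prod>b\<in>(Basis::'a set). 1 / sqrt (2 * pi)) * (\<Prod>b\<in>Basis. exp (- (x \<bullet> b)\<^sup>2 / 2))"
    unfolding std_normal_density_def prod.distrib by simp
  also have "\<dots> = (2 * pi) powr (- real DIM('a) / 2) * exp (\<Sum>b\<in>Basis. - (x \<bullet> b)\<^sup>2 / 2)"
    by (simp add: exp_sum const)
  also have "(\<Sum>b\<in>(Basis::'a set). - (x \<bullet> b)\<^sup>2 / 2) = - (norm x)\<^sup>2 / 2"
    by (simp add: norm sum_negf sum_divide_distrib)
  finally show ?thesis by (simp add: gauss_density_def)
qed

lemma prob_space_std_gauss: "prob_space (std_gauss :: 'a::euclidean_space measure)"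
proof -
  have normal: "(\<integral>\<^sup>+t. ennreal (std_normal_density t) \<partial>lborel) = 1"
    by (subst nn_integral_eq_integral) auto
  have "emeasure (std_gauss :: 'a measure) UNIV
      = (\<integral>\<^sup>+x. (\<Prod>b\<in>Basis. ennreal (std_normal_density (x \<bullet> b))) \<partial>(lborel :: 'a measure))"
    unfolding std_gauss_eq_density
    by (subst emeasure_density) (auto simp: gauss_density_eq_prod prod_ennreal intro!: nn_integral_cong)
  also have "\<dots> = (\<Prod>b\<in>(Basis::'a set). (\<integral>\<^sup>+t. ennreal (std_normal_density t) \<partial>lborel))"
    by (rule nn_integral_lborel_prod) auto
  also have "\<dots> = 1" by (simp add: normal)
  finally show ?thesis by (intro prob_spaceI) (simp add: std_gauss_def)
qed

lemma gauss_density_Pair: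
  "gauss_density ((x, y) :: 'a::euclidean_space \<times> 'a) = gauss_density x * gauss_density y"
proof -
  have "(2 * pi) powr (- real DIM('a \<times> 'a) / 2)
      = (2 * pi) powr (- real DIM('a) / 2) * (2 * pi) powr (- real DIM('a) / 2)"
    by (simp add: powr_add[symmetric])
  then show ?thesis
    by (simp add: gauss_density_def norm_Pair exp_add[symmetric] field_simps)
qed

lemma std_gauss_Times: "(std_gauss :: ('a::euclidean_space \<times> 'a) measure) = std_gauss \<Otimes>\<^sub>M std_gauss"
proof -
  have sf: "sigma_finite_measure (density lborel (\<lambda>x. ennreal (gauss_density (x::'a))))"
    using prob_space_std_gauss[where 'a='a]
    by (intro prob_space_imp_sigma_finite) (simp add: std_gauss_eq_density)
  have "(std_gauss :: 'a measure) \<Otimes>\<^sub>M (std_gauss :: 'a measure)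
      = density (lborel \<Otimes>\<^sub>M lborel) (\<lambda>(x, y). ennreal (gauss_density x) * ennreal (gauss_density y))"
    unfolding std_gauss_eq_density
    by (rule pair_measure_density) (auto simp: sf lborel.sigma_finite_measure_axioms)
  also have "\<dots> = density lborel (\<lambda>z. ennreal (gauss_density (z::'a \<times> 'a)))"
    unfolding lborel_prod
  proof (intro arg_cong[where f="density lborel"] ext)
    fix z :: "'a \<times> 'a"
    show "(case z of (x, y) \<Rightarrow> ennreal (gauss_density x) * ennreal (gauss_density y))
        = ennreal (gauss_density z)"
      by (cases z) (simp add: gauss_density_Pair ennreal_mult' gauss_density_nonneg)
  qed
  finally show ?thesis by (simp add: std_gauss_eq_density)
qed

lemma distr_std_gauss_isometric_involution:
  fixes T :: "'a::euclidean_space \<Rightarrow> 'a"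
  assumes T: "isometric_involution T"
  shows "distr std_gauss borel T = std_gauss"
proof -
  have [measurable]: "T \<in> borel_measurable borel"
    using T by (simp add: isometric_involution_def borel_measurable_linear)
  have "std_gauss = density (distr lborel borel T) (\<lambda>x. ennreal (gauss_density x))"
    by (simp add: lborel_distr_isometric_involution[OF T] std_gauss_eq_density)
  also have "\<dots> = distr (density lborel (\<lambda>x. ennreal (gauss_density (T x)))) borel T"
    by (rule density_distr) simp_all
  also have "(\<lambda>x. ennreal (gauss_density (T x))) = (\<lambda>x. ennreal (gauss_density x))"
    using T by (simp add: isometric_involution_def gauss_density_def)
  finally show ?thesis by (simp add: std_gauss_eq_density)
qed

section \<open>Orthogonal projections of a Gaussian vector\<close>

lemma closest_point_subspace_add:
  fixes L :: "'a::euclidean_space set"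
  assumes L: "subspace L" and p: "p \<in> L" and q: "q \<in> L\<^sup>\<bottom>"
  shows "closest_point L (p + q) = p"
proof (rule closest_point_unique[symmetric])
  show "convex L" "closed L" using L by (simp_all add: subspace_imp_convex closed_subspace)
  show "\<forall>z\<in>L. dist (p + q) p \<le> dist (p + q) z"
  proof
    fix z assume z: "z \<in> L"
    have "orthogonal (p - z) q" using q subspace_diff[OF L p z] by (auto simp: orthogonal_comp_def)
    then have "(norm q)\<^sup>2 \<le> (norm ((p - z) + q))\<^sup>2" by (simp add: norm_add_Pythagorean)
    then show "dist (p + q) p \<le> dist (p + q) z"
      by (simp add: dist_norm algebra_simps power2_le_iff_abs_le)
  qed
qed fact

lemma closest_point_orthogonal_comp_add:
  fixes L :: "'a::euclidean_space set"
  assumes L: "subspace L" and p: "p \<in> L" and q: "q \<in> L\<^sup>\<bottom>"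
  shows "closest_point (L\<^sup>\<bottom>) (p + q) = q"
  using closest_point_subspace_add[OF subspace_orthogonal_comp q] p orthogonal_comp_subset
  by (force simp: add.commute)

lemma closest_point_subspace_decomp:
  fixes L :: "'a::euclidean_space set"
  assumes L: "subspace L"
  shows "closest_point L x \<in> L" "closest_point (L\<^sup>\<bottom>) x \<in> L\<^sup>\<bottom>"
    "closest_point L x + closest_point (L\<^sup>\<bottom>) x = x"
proof -
  obtain p q where "p \<in> L" "q \<in> L\<^sup>\<bottom>" "x = p + q"
    using subspace_sum_orthogonal_comp[OF L] by (metis UNIV_I set_plus_elim)
  then show "closest_point L x \<in> L" "closest_point (L\<^sup>\<bottom>) x \<in> L\<^sup>\<bottom>"
    "closest_point L x + closest_point (L\<^sup>\<bottom>) x = x"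
    using closest_point_subspace_add[OF L] closest_point_orthogonal_comp_add[OF L] by auto
qed

lemma linear_closest_point_subspace:
  fixes L :: "'a::euclidean_space set"
  assumes L: "subspace L"
  shows "linear (closest_point L)"
proof (rule linearI)
  let ?P = "closest_point L" and ?Q = "closest_point (L\<^sup>\<bottom>)"
  note decomp = closest_point_subspace_decomp[OF L]
  fix x y :: 'a and c :: real
  have "?P (x + y) = ?P ((?P x + ?P y) + (?Q x + ?Q y))"
    using decomp(3)[of x] decomp(3)[of y] by (simp add: algebra_simps)
  also have "\<dots> = ?P x + ?P y"
    using decomp(1,2) L subspace_orthogonal_comp
    by (intro closest_point_subspace_add[OF L] subspace_add) auto
  finally show "?P (x + y) = ?P x + ?P y" .
  have "?P (c *\<^sub>R x) = ?P (c *\<^sub>R ?P x + c *\<^sub>R ?Q x)"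
    using decomp(3)[of x] by (metis scaleR_add_right)
  also have "\<dots> = c *\<^sub>R ?P x"
    using decomp(1,2) L subspace_orthogonal_comp
    by (intro closest_point_subspace_add[OF L] subspace_scale) auto
  finally show "?P (c *\<^sub>R x) = c *\<^sub>R ?P x" .
qed

text \<open>Swapping the \<open>L\<^sup>\<bottom>\<close>-components of two independent standard Gaussian vectors preserves
  their joint law; this is what makes the two components of one Gaussian vector independent.\<close>

lemma isometric_involution_swap_orthogonal_comp:
  fixes L :: "'a::euclidean_space set"
  defines "P \<equiv> closest_point L" and "Q \<equiv> closest_point (L\<^sup>\<bottom>)"
  assumes L: "subspace L"
  shows "isometric_involution (\<lambda>(u, v). (P u + Q v, Q u + P v))"
proof -
  note decomp = closest_point_subspace_decomp[OF L, folded P_def Q_def]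
  have P_add: "P (P u + Q v) = P u" and Q_add: "Q (P u + Q v) = Q v" for u v
    unfolding P_def Q_def using closest_point_subspace_decomp[OF L]
    by (simp_all add: closest_point_subspace_add[OF L] closest_point_orthogonal_comp_add[OF L])
  have norm_add: "(norm (P u + Q v))\<^sup>2 = (norm (P u))\<^sup>2 + (norm (Q v))\<^sup>2" for u v
    using decomp(1)[of u] decomp(2)[of v]
    by (intro norm_add_Pythagorean) (simp add: orthogonal_comp_def)
  have "linear P" "linear Q"
    unfolding P_def Q_def using L subspace_orthogonal_comp by (auto intro: linear_closest_point_subspace)
  then have "linear (\<lambda>(u, v). (P u + Q v, Q u + P v))"
    by (intro linearI) (auto simp: linear_add linear_scale algebra_simps)
  moreover have "norm (P u + Q v, Q u + P v) = norm (u, v)" for u v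
  proof -
    have "(norm (P u + Q v, Q u + P v))\<^sup>2 = (norm (u, v))\<^sup>2"
      using norm_add[of u v] norm_add[of v u] norm_add[of u u, unfolded decomp(3)]
        norm_add[of v v, unfolded decomp(3)]
      by (simp add: norm_Pair add.commute[of "Q u"])
    then show ?thesis by (simp add: power2_eq_iff_nonneg)
  qed
  moreover have "(P (P u + Q v) + Q (Q u + P v), Q (P u + Q v) + P (Q u + P v)) = (u, v)" for u v
    using P_add Q_add decomp(3) by (metis add.commute)
  ultimately show ?thesis by (auto simp: isometric_involution_def)
qed

lemma std_gauss_indep_closest_point:
  fixes L :: "'a::euclidean_space set"
  defines "P \<equiv> closest_point L" and "Q \<equiv> closest_point (L\<^sup>\<bottom>)"
  assumes L: "subspace L" and X: "X \<in> sets borel" and Y: "Y \<in> sets borel"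
  shows "measure std_gauss {x. P x \<in> X \<and> Q x \<in> Y}
       = measure std_gauss {x. P x \<in> X} * measure std_gauss {x. Q x \<in> Y}"
proof -
  interpret G: prob_space "std_gauss :: 'a measure" by (rule prob_space_std_gauss)
  define R :: "'a \<times> 'a \<Rightarrow> 'a \<times> 'a" where "R = (\<lambda>(u, v). (P u + Q v, Q u + P v))"
  have R: "isometric_involution R"
    unfolding R_def P_def Q_def by (rule isometric_involution_swap_orthogonal_comp[OF L])
  have [measurable]: "P \<in> borel_measurable borel" "Q \<in> borel_measurable borel" "R \<in> borel_measurable borel"
    unfolding P_def Q_def
    using L subspace_orthogonal_comp R
    by (auto intro!: borel_measurable_linear linear_closest_point_subspace simp: isometric_involution_def)
  define S where "S = {x. P x \<in> X \<and> Q x \<in> Y}"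
  have [measurable]: "S \<in> sets borel" unfolding S_def using X Y by measurable
  have [measurable]: "S \<times> UNIV \<in> sets (borel :: ('a \<times> 'a) measure)"
    by (simp add: borel_prod[symmetric])
  have "emeasure std_gauss S = emeasure (std_gauss \<Otimes>\<^sub>M std_gauss) (S \<times> (UNIV :: 'a set))"
    using G.emeasure_space_1 by (subst G.emeasure_pair_measure_Times) auto
  also have "\<dots> = emeasure (distr std_gauss borel R) (S \<times> UNIV)"
    by (metis distr_std_gauss_isometric_involution[OF R] std_gauss_Times)
  also have "\<dots> = emeasure std_gauss (R -` (S \<times> UNIV))"
    by (subst emeasure_distr) (auto simp: measurable_cong_sets[OF sets_std_gauss refl])
  also have "R -` (S \<times> UNIV) = {x. P x \<in> X} \<times> {x. Q x \<in> Y}"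
    unfolding R_def S_def P_def Q_def using closest_point_subspace_decomp[OF L]
    by (auto simp: closest_point_subspace_add[OF L] closest_point_orthogonal_comp_add[OF L])
  also have "emeasure std_gauss \<dots> = emeasure std_gauss {x. P x \<in> X} * emeasure std_gauss {x. Q x \<in> Y}"
    using X Y by (simp add: std_gauss_Times G.emeasure_pair_measure_Times)
  finally have "emeasure std_gauss S = emeasure std_gauss {x. P x \<in> X} * emeasure std_gauss {x. Q x \<in> Y}" .
  then show ?thesis
    by (simp add: S_def G.emeasure_eq_measure ennreal_mult'[symmetric])
qed

lemma msum_commute: "msum X Y = msum Y X"
  by (auto simp: msum_def) (metis add.commute)+

lemma msum_orthogonal_comp_eq:
  fixes L :: "'a::euclidean_space set"
  assumes L: "subspace L" and X: "X \<subseteq> L" and M: "M \<subseteq> L\<^sup>\<bottom>"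
  shows "msum X M = {x. closest_point L x \<in> X \<and> closest_point (L\<^sup>\<bottom>) x \<in> M}"
proof (intro set_eqI iffI)
  fix x assume "x \<in> msum X M"
  then obtain a m where "a \<in> X" "m \<in> M" "x = a + m" by (auto simp: msum_def)
  moreover from this have "a \<in> L" "m \<in> L\<^sup>\<bottom>" using X M by auto
  ultimately show "x \<in> {x. closest_point L x \<in> X \<and> closest_point (L\<^sup>\<bottom>) x \<in> M}"
    using closest_point_subspace_add[OF L] closest_point_orthogonal_comp_add[OF L] by auto
next
  fix x assume "x \<in> {x. closest_point L x \<in> X \<and> closest_point (L\<^sup>\<bottom>) x \<in> M}"
  then show "x \<in> msum X M"
    using closest_point_subspace_decomp(3)[OF L, of x] unfolding msum_def by force
qed

lemma gamma_d_msum_orthogonal_comp: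
  fixes L :: "'a::euclidean_space set"
  assumes L: "subspace L" and "X \<subseteq> L" "M \<subseteq> L\<^sup>\<bottom>" "X \<in> sets borel" "M \<in> sets borel"
  shows "gamma_d (msum X M) = gamma_sub L X * gamma_sub (L\<^sup>\<bottom>) M"
  using assms by (simp add: gamma_d_def gamma_sub_def msum_orthogonal_comp_eq std_gauss_indep_closest_point)

lemma gamma_sub_self:
  assumes "subspace (W :: 'a::euclidean_space set)"
  shows "gamma_sub W W = 1"
proof -
  interpret prob_space "std_gauss :: 'a measure" by (rule prob_space_std_gauss)
  have "{x. closest_point W x \<in> W} = UNIV"
    using closest_point_subspace_decomp(1)[OF assms] by blast
  then show ?thesis using prob_space by (simp add: gamma_sub_def)
qed

section \<open>Normal cones of polyhedral cones\<close>

lemma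
  fixes Y :: "'a::euclidean_space set"
  shows closed_polyhedral_cone_halfspaces: "closed {x. \<forall>y\<in>Y. y \<bullet> x \<le> 0}"
    and convex_polyhedral_cone_halfspaces: "convex {x. \<forall>y\<in>Y. y \<bullet> x \<le> 0}"
    and conic_polyhedral_cone_halfspaces: "conic {x. \<forall>y\<in>Y. y \<bullet> x \<le> 0}"
proof -
  have eq: "{x. \<forall>y\<in>Y. y \<bullet> x \<le> 0} = (\<Inter>y\<in>Y. {x. y \<bullet> x \<le> 0})" by auto
  show "closed {x. \<forall>y\<in>Y. y \<bullet> x \<le> 0}" "convex {x. \<forall>y\<in>Y. y \<bullet> x \<le> 0}"
    unfolding eq by (auto intro!: closed_INT closed_halfspace_le convex_INT convex_halfspace_le)
  show "conic {x. \<forall>y\<in>Y. y \<bullet> x \<le> 0}"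
    by (auto simp: conic_def mult_nonneg_nonpos)
qed

lemma polyhedral_cone_halfspaces:
  assumes "polyhedral_cone (C :: 'a::euclidean_space set)"
  obtains Y where "finite Y" "C = {x. \<forall>y\<in>Y. y \<bullet> x \<le> 0}"
  using assms that[of "{}"] unfolding polyhedral_cone_def by auto

lemma face_of_conic_contains_0:
  fixes C :: "'a::euclidean_space set"
  assumes C: "conic C" and F: "F face_of C" "F \<noteq> {}"
  shows "0 \<in> F"
proof -
  obtain x where x: "x \<in> F" using F by auto
  have xC: "x \<in> C" using x face_of_imp_subset[OF F(1)] by auto
  show ?thesis
  proof (cases "x = 0")
    case False
    have "0 \<in> C" "2 *\<^sub>R x \<in> C" using C xC conic_def by (metis order_refl scaleR_zero_left zero_le_numeral)+
    moreover have "x \<in> open_segment 0 (2 *\<^sub>R x)"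
      using False by (auto simp: open_segment_def closed_segment_def scaleR_2 intro!: exI[of _ "1/2"])
    ultimately show ?thesis using face_ofD[OF F(1)] x by blast
  qed (use x in simp)
qed

lemma rel_interior_inner_eq_0:
  fixes F :: "'a::euclidean_space set"
  assumes F: "convex F" and x0: "x0 \<in> rel_interior F"
    and le: "\<And>x. x \<in> F \<Longrightarrow> w \<bullet> x \<le> 0" and eq: "w \<bullet> x0 = 0" and x: "x \<in> F"
  shows "w \<bullet> x = 0"
proof -
  obtain m where m: "m > 1" "\<forall>e. e > 1 \<and> e \<le> m \<longrightarrow> (1 - e) *\<^sub>R x + e *\<^sub>R x0 \<in> F"
    using convex_rel_interior_if[OF F x0] hull_inc[OF x] by metis
  then have "w \<bullet> ((1 - m) *\<^sub>R x + m *\<^sub>R x0) \<le> 0" by (intro le) simp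
  then have "(1 - m) * (w \<bullet> x) \<le> 0" by (simp add: inner_add_right eq)
  then show ?thesis using m(1) le[OF x] by (simp add: mult_le_0_iff)
qed

lemma eventually_at_right_in_polyhedral_cone:
  fixes x0 c :: "'a::euclidean_space"
  assumes Y: "finite Y" and x0: "\<And>y. y \<in> Y \<Longrightarrow> y \<bullet> x0 \<le> 0"
    and c: "\<And>y. y \<in> Y \<Longrightarrow> y \<bullet> x0 = 0 \<Longrightarrow> y \<bullet> c \<le> 0"
  shows "\<forall>\<^sub>F t in at_right 0. t > 0 \<and> (\<forall>y\<in>Y. y \<bullet> (x0 + t *\<^sub>R c) \<le> 0)"
proof -
  have "\<forall>\<^sub>F t in at_right 0. y \<bullet> (x0 + t *\<^sub>R c) \<le> 0" if y: "y \<in> Y" for y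
  proof (cases "y \<bullet> x0 = 0")
    case True
    show ?thesis using eventually_at_right_less[of 0]
      by eventually_elim (use True c[OF y True] in \<open>auto simp: inner_add_right mult_nonneg_nonpos\<close>)
  next
    case False
    then have "y \<bullet> (x0 + 0 *\<^sub>R c) < 0" using x0[OF y] by simp
    moreover have "((\<lambda>t. y \<bullet> (x0 + t *\<^sub>R c)) \<longlongrightarrow> y \<bullet> (x0 + 0 *\<^sub>R c)) (at_right 0)"
      by (intro tendsto_intros)
    ultimately have "\<forall>\<^sub>F t in at_right 0. y \<bullet> (x0 + t *\<^sub>R c) < 0"
      by (intro order_tendstoD)
    then show ?thesis by eventually_elim simp
  qed
  then have "\<forall>\<^sub>F t in at_right 0. \<forall>y\<in>Y. y \<bullet> (x0 + t *\<^sub>R c) \<le> 0"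
    by (intro eventually_ball_finite[OF Y] ballI)
  with eventually_at_right_less[of 0] show ?thesis by eventually_elim simp
qed

lemma farkas_active_constraints:
  fixes x0 v :: "'a::euclidean_space"
  assumes Y: "finite Y" and x0: "\<And>y. y \<in> Y \<Longrightarrow> y \<bullet> x0 \<le> 0"
    and v: "\<And>x. \<forall>y\<in>Y. y \<bullet> x \<le> 0 \<Longrightarrow> v \<bullet> x \<le> 0" and v0: "v \<bullet> x0 = 0"
  shows "v \<in> convex_cone hull {y\<in>Y. y \<bullet> x0 = 0}"
proof (rule ccontr)
  define K where "K = convex_cone hull {y\<in>Y. y \<bullet> x0 = 0}"
  assume "v \<notin> convex_cone hull {y\<in>Y. y \<bullet> x0 = 0}"
  moreover have "closed K" "convex K"
    unfolding K_def using Y by (auto intro: closed_convex_cone_hull simp: convex_convex_cone_hull)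
  ultimately obtain a b where ab: "a \<bullet> v < b" "\<And>x. x \<in> K \<Longrightarrow> a \<bullet> x > b"
    using separating_hyperplane_closed_point[of K v] by (auto simp: K_def)
  have b: "b < 0" using ab(2)[of 0] by (simp add: K_def convex_cone_hull_contains_0)
  have aK: "a \<bullet> z \<ge> 0" if "z \<in> K" for z
  proof (rule ccontr)
    assume "\<not> a \<bullet> z \<ge> 0"
    then have "(b / (a \<bullet> z)) *\<^sub>R z \<in> K" "a \<bullet> ((b / (a \<bullet> z)) *\<^sub>R z) = b"
      using b that by (simp_all add: K_def convex_cone_hull_mul divide_nonpos_neg)
    then show False using ab(2) by fastforce
  qed
  have "\<forall>y\<in>Y. y \<bullet> x0 = 0 \<longrightarrow> y \<bullet> - a \<le> 0"
    using aK by (auto simp: K_def hull_inc inner_commute)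
  then obtain t where t: "t > 0" "\<forall>y\<in>Y. y \<bullet> (x0 + t *\<^sub>R (- a)) \<le> 0"
    using eventually_happens'[OF trivial_limit_at_right_real eventually_at_right_in_polyhedral_cone[OF Y x0]]
    by blast
  then have "t * (v \<bullet> a) \<ge> 0" using v[OF t(2)] by (simp add: inner_diff_right v0)
  then show False using ab(1) b t(1) by (simp add: inner_commute zero_le_mult_iff)
qed

lemma convex_cone_normal_cone: "convex_cone (normal_cone C F)"
  unfolding convex_cone_iff normal_cone_def
  by (auto simp: inner_add_left mult_nonneg_nonpos intro: add_nonpos_nonpos)

lemma closed_normal_cone: "closed (normal_cone S (T :: 'a::euclidean_space set))"
proof -
  have "normal_cone S T = (\<Inter>x\<in>S. {y. x \<bullet> y \<le> 0}) \<inter> (\<Inter>x\<in>T. {y. x \<bullet> y = 0})"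
    by (auto simp: normal_cone_def inner_commute)
  then show ?thesis by (auto intro!: closed_Int closed_INT closed_halfspace_le closed_hyperplane)
qed

lemma normal_cone_self: "normal_cone S S = (span S)\<^sup>\<bottom>"
proof (intro set_eqI iffI)
  fix y assume "y \<in> normal_cone S S"
  then have "span S \<subseteq> {x. y \<bullet> x = 0}"
    by (intro span_minimal) (auto simp: normal_cone_def subspace_hyperplane)
  then show "y \<in> (span S)\<^sup>\<bottom>"
    by (auto simp: orthogonal_comp_def orthogonal_def inner_commute)
next
  fix y assume "y \<in> (span S)\<^sup>\<bottom>"
  then show "y \<in> normal_cone S S"
    using span_base by (fastforce simp: normal_cone_def orthogonal_comp_def orthogonal_def inner_commute)
qed

lemma active_constraint_in_normal_cone:
  fixes C :: "'a::euclidean_space set"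
  assumes C: "C = {x. \<forall>y\<in>Y. y \<bullet> x \<le> 0}" and F: "F face_of C" and x0: "x0 \<in> rel_interior F"
    and y: "y \<in> Y" "y \<bullet> x0 = 0"
  shows "y \<in> normal_cone C F"
  unfolding normal_cone_def
proof safe
  show "y \<bullet> x \<le> 0" if "x \<in> C" for x using that y C by auto
  show "y \<bullet> x = 0" if "x \<in> F" for x
    using face_of_imp_subset[OF F] y C
    by (intro rel_interior_inner_eq_0[OF face_of_imp_convex[OF F] x0 _ y(2) that]) auto
qed

lemma normal_cone_polyhedral_face:
  fixes C :: "'a::euclidean_space set"
  assumes Y: "finite Y" and C: "C = {x. \<forall>y\<in>Y. y \<bullet> x \<le> 0}"
    and F: "F face_of C" and x0: "x0 \<in> rel_interior F"
  shows "normal_cone C F = convex_cone hull {y\<in>Y. y \<bullet> x0 = 0}"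
proof
  have x0C: "x0 \<in> F" "x0 \<in> C" using x0 rel_interior_subset face_of_imp_subset[OF F] by auto
  show "normal_cone C F \<subseteq> convex_cone hull {y\<in>Y. y \<bullet> x0 = 0}"
    using x0C C by (auto simp: normal_cone_def intro!: farkas_active_constraints[OF Y])
  show "convex_cone hull {y\<in>Y. y \<bullet> x0 = 0} \<subseteq> normal_cone C F"
    using active_constraint_in_normal_cone[OF C F x0] convex_cone_normal_cone
    by (intro hull_minimal) auto
qed

lemma normal_cone_Int_transversal:
  fixes C D :: "'a::euclidean_space set"
  assumes YC: "finite YC" "C = {x. \<forall>y\<in>YC. y \<bullet> x \<le> 0}"
    and YD: "finite YD" "D = {x. \<forall>y\<in>YD. y \<bullet> x \<le> 0}"
    and F: "F face_of C" and G: "G face_of D"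
    and x0: "x0 \<in> rel_interior F" "x0 \<in> rel_interior G"
  shows "normal_cone (C \<inter> D) (F \<inter> G) = msum (normal_cone C F) (normal_cone D G)"
proof -
  have "C \<inter> D = {x. \<forall>y\<in>YC \<union> YD. y \<bullet> x \<le> 0}" using YC YD by auto
  moreover have "x0 \<in> rel_interior (F \<inter> G)"
    using x0 face_of_imp_convex[OF F] face_of_imp_convex[OF G] convex_rel_interior_inter_two by blast
  ultimately have "normal_cone (C \<inter> D) (F \<inter> G) = convex_cone hull {y\<in>YC \<union> YD. y \<bullet> x0 = 0}"
    using YC YD by (intro normal_cone_polyhedral_face face_of_Int_Int F G) auto
  also have "{y\<in>YC \<union> YD. y \<bullet> x0 = 0} = {y\<in>YC. y \<bullet> x0 = 0} \<union> {y\<in>YD. y \<bullet> x0 = 0}" by auto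
  finally show ?thesis
    using normal_cone_polyhedral_face[OF YC F x0(1)] normal_cone_polyhedral_face[OF YD G x0(2)]
    by (auto simp: convex_cone_hull_Un msum_def)
qed

lemma span_normal_cone_polyhedral_face:
  fixes C :: "'a::euclidean_space set"
  assumes Y: "finite Y" and C: "C = {x. \<forall>y\<in>Y. y \<bullet> x \<le> 0}"
    and F: "F face_of C" and x0: "x0 \<in> rel_interior F"
  shows "span (normal_cone C F) = (span F)\<^sup>\<bottom>"
proof
  show "span (normal_cone C F) \<subseteq> (span F)\<^sup>\<bottom>"
    using normal_cone_self[of F] by (intro span_minimal) (auto simp: normal_cone_def subspace_orthogonal_comp)
  have "(span (normal_cone C F))\<^sup>\<bottom> \<subseteq> span F"
  proof
    fix z assume z: "z \<in> (span (normal_cone C F))\<^sup>\<bottom>"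
    have x0C: "x0 \<in> F" "\<And>y. y \<in> Y \<Longrightarrow> y \<bullet> x0 \<le> 0"
      using x0 rel_interior_subset face_of_imp_subset[OF F] C by auto
    have active: "y \<bullet> z = 0" if "y \<in> Y" "y \<bullet> x0 = 0" for y
      using z span_base[OF active_constraint_in_normal_cone[OF C F x0 that]]
      by (auto simp: orthogonal_comp_def orthogonal_def)
    have "\<forall>\<^sub>F t in at_right 0. t > 0 \<and> (\<forall>y\<in>Y. y \<bullet> (x0 + t *\<^sub>R z) \<le> 0)"
      "\<forall>\<^sub>F t in at_right 0. t > 0 \<and> (\<forall>y\<in>Y. y \<bullet> (x0 + t *\<^sub>R (- z)) \<le> 0)"
      by (rule eventually_at_right_in_polyhedral_cone[OF Y x0C(2)]; simp add: active)+
    then have "\<forall>\<^sub>F t in at_right 0. t > 0 \<and> x0 + t *\<^sub>R z \<in> C \<and> x0 - t *\<^sub>R z \<in> C"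
      by eventually_elim (simp add: C)
    then obtain t where t: "t > 0" "x0 + t *\<^sub>R z \<in> C" "x0 - t *\<^sub>R z \<in> C"
      using eventually_happens'[OF trivial_limit_at_right_real] by blast
    show "z \<in> span F"
    proof (cases "z = 0")
      case False
      then have "x0 \<in> open_segment (x0 - t *\<^sub>R z) (x0 + t *\<^sub>R z)"
        using t(1) by (auto simp: open_segment_def closed_segment_def intro!: exI[of _ "1/2"])
          (simp add: algebra_simps flip: scaleR_add_left)
      then have "x0 - t *\<^sub>R z \<in> F" "x0 + t *\<^sub>R z \<in> F"
        using face_ofD[OF F] t x0C(1) by blast+
      then have "(1 / (2 * t)) *\<^sub>R ((x0 + t *\<^sub>R z) - (x0 - t *\<^sub>R z)) \<in> span F"
        by (intro span_mul span_diff span_base)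
      then show ?thesis using t(1) by (simp add: algebra_simps scaleR_2[symmetric])
    qed (simp add: span_zero)
  qed
  then have "(span F)\<^sup>\<bottom> \<subseteq> (span (normal_cone C F))\<^sup>\<bottom>\<^sup>\<bottom>"
    by (rule orthogonal_comp_anti_mono)
  then show "(span F)\<^sup>\<bottom> \<subseteq> span (normal_cone C F)"
    by (simp add: orthogonal_comp_self)
qed

lemma dim_orthogonal_comp:
  fixes L :: "'a::euclidean_space set"
  assumes L: "subspace L"
  shows "dim (L\<^sup>\<bottom>) = DIM('a) - dim L"
proof -
  have "dim (L \<union> L\<^sup>\<bottom>) = dim L + dim (L\<^sup>\<bottom>)"
    by (rule dim_orthogonal_sum) (auto simp: orthogonal_comp_def orthogonal_def)
  moreover have "span (L \<union> L\<^sup>\<bottom>) = UNIV"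
    using subspace_sum_orthogonal_comp[OF L]
    by (metis (no_types, lifting) UNIV_I UNIV_eq_I UnI1 UnI2 set_plus_elim span_add span_base)
  then have "dim (L \<union> L\<^sup>\<bottom>) = DIM('a)" by (metis dim_span dim_UNIV)
  ultimately show ?thesis by simp
qed

lemma kfaces_self:
  assumes "convex (S :: 'a::euclidean_space set)" "aff_dim S = int n"
  shows "kfaces n S = {S}"
proof -
  have "T = S" if "T face_of S" "aff_dim T = int n" for T
    using face_of_aff_dim_lt[OF assms(1) that(1)] that(2) assms(2) by force
  then show ?thesis using face_of_refl[OF assms(1)] assms(2) by (auto simp: kfaces_def)
qed

lemma gamma_d_msum_face_normal_cone:
  fixes K M X :: "'a::euclidean_space set"
  assumes K: "convex K" "closed K" "0 \<in> K" "aff_dim K = int k"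
    and M: "convex_cone M" "closed M" "span M = (span K)\<^sup>\<bottom>"
    and X: "X \<in> sets borel"
  shows "gamma_d (msum (X \<inter> K) M) = curv_measure k K X * conic_intrinsic_volume (DIM('a) - k) M"
proof -
  define L where "L = span K"
  have L: "subspace L" "L \<in> sets borel"
    unfolding L_def by (simp_all add: borel_closed closed_subspace)
  have "aff_dim M = int (dim M)"
    using M(1) by (intro aff_dim_zero hull_inc) (simp add: convex_cone_contains_0)
  also have "dim M = dim (L\<^sup>\<bottom>)" by (metis dim_span M(3) L_def)
  also have "\<dots> = DIM('a) - k"
    using dim_orthogonal_comp[OF L(1)] aff_dim_zero[of K] K by (simp add: L_def hull_inc)
  finally have kfaces_M: "kfaces (DIM('a) - k) M = {M}"
    using M(1) by (intro kfaces_self) (simp_all add: convex_cone_def)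
  have kfaces_K: "kfaces k K = {K}" by (rule kfaces_self[OF K(1,4)])
  have XK: "X \<inter> K \<in> sets borel" "X \<inter> K \<subseteq> L"
    using X K(2) by (auto simp: L_def span_base)
  have M_L: "M \<in> sets borel" "M \<subseteq> L\<^sup>\<bottom>"
    using M span_superset[of M] by (auto simp: L_def)
  have "gamma_d (msum (X \<inter> K) M) = gamma_sub L (X \<inter> K) * gamma_sub (L\<^sup>\<bottom>) M"
    using XK M_L by (intro gamma_d_msum_orthogonal_comp L)
  also have "gamma_sub L (X \<inter> K) = curv_measure k K X"
    using gamma_sub_self[OF subspace_orthogonal_comp, of L]
    by (simp add: curv_measure_def kfaces_K normal_cone_self Int_commute flip: L_def)
  also have "gamma_sub (L\<^sup>\<bottom>) M = conic_intrinsic_volume (DIM('a) - k) M"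
    using gamma_d_msum_orthogonal_comp[of L L M] gamma_sub_self[of L] L M_L
    by (simp add: conic_intrinsic_volume_def kfaces_M normal_cone_self M(3) orthogonal_comp_self
        msum_commute[of M] flip: L_def)
  finally show ?thesis .
qed

theorem lemma3p4:
  fixes C D F G A B :: "'a::euclidean_space set" and i j k :: nat
  assumes "DIM('a) \<ge> 2"
    and "polyhedral_cone C" and "polyhedral_cone D"
    and "conic_borel A" and "conic_borel B"
    and "F \<in> kfaces i C" and "G \<in> kfaces j D"
    and "i + j = DIM('a) + k" and "k > 0"
    and "transverse F G"
  shows "local_phi (F \<inter> G) (C \<inter> D) (A \<inter> B) =
         curv_measure k (F \<inter> G) (A \<inter> B) *
         conic_intrinsic_volume (DIM('a) - k) (msum (normal_cone C F) (normal_cone D G))"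
proof -
  obtain YC where YC: "finite YC" "C = {x. \<forall>y\<in>YC. y \<bullet> x \<le> 0}"
    using polyhedral_cone_halfspaces[OF assms(2)] .
  obtain YD where YD: "finite YD" "D = {x. \<forall>y\<in>YD. y \<bullet> x \<le> 0}"
    using polyhedral_cone_halfspaces[OF assms(3)] .
  have CD: "C \<inter> D = {x. \<forall>y\<in>YC \<union> YD. y \<bullet> x \<le> 0}" using YC YD by auto
  have F: "F face_of C" "aff_dim F = int i" and G: "G face_of D" "aff_dim G = int j"
    using assms(6,7) by (auto simp: kfaces_def)
  obtain x0 where x0: "x0 \<in> rel_interior F" "x0 \<in> rel_interior G"
    using assms(10) by (auto simp: transverse_def)
  have FG: "F \<inter> G face_of C \<inter> D" "x0 \<in> rel_interior (F \<inter> G)" "aff_dim (F \<inter> G) = int k"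
    using face_of_Int_Int[OF F(1) G(1)] x0 face_of_imp_convex[OF F(1)] face_of_imp_convex[OF G(1)]
      convex_rel_interior_inter_two assms(8,10) F(2) G(2) by (auto simp: transverse_def)
  have "0 \<in> F \<inter> G"
    using FG(1,2) CD rel_interior_subset conic_polyhedral_cone_halfspaces
    by (intro face_of_conic_contains_0) auto
  moreover have "convex (F \<inter> G)" "closed (F \<inter> G)"
    using FG(1) CD face_of_imp_convex face_of_imp_closed
      convex_polyhedral_cone_halfspaces closed_polyhedral_cone_halfspaces by metis+
  moreover have "span (normal_cone (C \<inter> D) (F \<inter> G)) = (span (F \<inter> G))\<^sup>\<bottom>"
    by (rule span_normal_cone_polyhedral_face[OF _ CD FG(1,2)]) (simp add: YC(1) YD(1))
  moreover have "A \<inter> B \<in> sets borel" using assms(4,5) by (auto simp: conic_borel_def)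
  ultimately show ?thesis
    using gamma_d_msum_face_normal_cone[OF _ _ _ FG(3) convex_cone_normal_cone closed_normal_cone]
    by (simp add: local_phi_def normal_cone_Int_transversal[OF YC YD F(1) G(1) x0, symmetric])
qed

end
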